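(* Let $\mathcal{M}$ be a discounted Markov decision process with finite state space $\mathcal{S}$, action space $\mathcal{A}$, transition kernel $P(s'|s,a)$, cost function $c(s,a)$ and discount factor $\gamma\in[0,1)$, and let $\hat{\mathcal{M}}$ be an MDP on the same state and action spaces with transition kernel $\hat P$ and cost $\hat c$ such that for all $(s,a)$, $\|\hat P(\cdot|s,a)-P(\cdot|s,a)\|_1\le\alpha$ and $|\hat c(s,a)-c(s,a)|\le\alpha$. Let $\pi^*$ be an optimal (cost-minimizing) policy on $\mathcal{M}$ with value function $V^{\pi^*}_{\mathcal{M}}(s)=\mathbb{E}\left[\sum_{t\ge0}\gamma^t c(s_t,a_t)\mid s_0=s\right]$, and let $V_{\min}\le V^{\pi^*}_{\mathcal{M}}\le V_{\max}$ and $c_{\min}\le c\le c_{\max}$. For a horizon $H\ge1$, a policy $\pi$, a terminal function $V$ and an MDP $\mathcal{N}$ with cost $c_{\mathcal{N}}$, define for each start state $s_0$ $$J^{\pi}_{\mathcal{N},V,H}(s_0)=\mathbb{E}_{\pi,\mathcal{N}}\left[\sum_{i=0}^{H-1}\gamma^i c_{\mathcal{N}}(s_i,a_i)+\gamma^H V(s_H)\right],$$ where the expectation is over trajectories obtained by executing $\pi$ in $\mathcal{N}$ from $s_0$. Then for any policy $\pi$, $$\left\|J^{\pi}_{\mathcal{M},V^{\pi^*}_{\mathcal{M}},H}-J^{\pi}_{\hat{\mathcal{M}},V^{\pi^*}_{\mathcal{M}},H}\right\|_\infty\le\gamma\frac{1-\gamma^{H-1}}{1-\gamma}\,\alpha H\,\frac{c_{\max}-c_{\min}}{2}+\gamma^H\alpha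 H\,\frac{V_{\max}-V_{\min}}{2}+\frac{1-\gamma^H}{1-\gamma}\alpha,$$ where the $\infty$-norm is taken over the start state $s_0$.
   Context: Costs are minimized. In $J^{\pi}_{\mathcal{M},\cdot,H}$ the running cost is $c$ and transitions follow $P$; in $J^{\pi}_{\hat{\mathcal{M}},\cdot,H}$ the running cost is $\hat c$ and transitions follow $\hat P$; in both the terminal cost is the true optimal value function $V^{\pi^*}_{\mathcal{M}}$. *)

theory Defs
  imports "HOL-Probability.Probability"
begin

text \<open>A (general, history-dependent, randomized) policy maps the history of past
  state-action pairs and the current state to a distribution over actions.\<close>

type_synonym ('s, 'a) policy = "('s \<times> 'a) list \<Rightarrow> 's \<Rightarrow> 'a pmf"

fun Jaux :: "('s \<Rightarrow> 'a \<Rightarrow> 's pmf) \<Rightarrow> ('s \<Rightarrow> 'a \<Rightarrow> real) \<Rightarrow> real \<Rightarrow> ('s, 'a) policy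
    \<Rightarrow> ('s \<Rightarrow> real) \<Rightarrow> nat \<Rightarrow> ('s \<times> 'a) list \<Rightarrow> 's \<Rightarrow> real" where
  "Jaux P c g pol V 0 h s = V s"
| "Jaux P c g pol V (Suc k) h s =
     measure_pmf.expectation (pol h s)
       (\<lambda>a. c s a + g * measure_pmf.expectation (P s a)
                             (\<lambda>s'. Jaux P c g pol V k (h @ [(s, a)]) s'))"

definition Jfun :: "('s \<Rightarrow> 'a \<Rightarrow> 's pmf) \<Rightarrow> ('s \<Rightarrow> 'a \<Rightarrow> real) \<Rightarrow> real \<Rightarrow> ('s, 'a) policy
    \<Rightarrow> ('s \<Rightarrow> real) \<Rightarrow> nat \<Rightarrow> 's \<Rightarrow> real" where
  "Jfun P c g pol V H s0 = Jaux P c g pol V H [] s0"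

definition value_fun :: "('s \<Rightarrow> 'a \<Rightarrow> 's pmf) \<Rightarrow> ('s \<Rightarrow> 'a \<Rightarrow> real) \<Rightarrow> real \<Rightarrow> ('s, 'a) policy
    \<Rightarrow> 's \<Rightarrow> real" where
  "value_fun P c g pol s = lim (\<lambda>n. Jfun P c g pol (\<lambda>_. 0) n s)"

definition optimal_policy :: "('s \<Rightarrow> 'a \<Rightarrow> 's pmf) \<Rightarrow> ('s \<Rightarrow> 'a \<Rightarrow> real) \<Rightarrow> real
    \<Rightarrow> ('s, 'a) policy \<Rightarrow> bool" where
  "optimal_policy P c g polstar \<longleftrightarrow>
     (\<forall>pol s. value_fun P c g polstar s \<le> value_fun P c g pol s)"

end

theory Submission
  imports Defs
begin

text \<open>One step of the Bellman recursion
  costs at most \<open>alpha\<close> from the perturbed cost, plus \<open>g\<close> times the error made by taking the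
  expectation of the true continuation value under \<open>Ph\<close> instead of \<open>P\<close>, plus \<open>g\<close> times the
  error already accumulated in the continuation. Since the continuation value ranges over an
  interval of width \<open>(cmax - cmin) (\<Sum>i<k. g\<^sup>i) + g\<^sup>k (Vmax - Vmin)\<close>, the middle
  error is at most \<open>alpha/2\<close> times this width: for a function with values in \<open>[L, U]\<close>,
  changing the distribution by \<open>\<delta>\<close> in \<open>\<ell>\<^sub>1\<close> changes the expectation by at most
  \<open>\<delta> (U - L) / 2\<close>, because subtracting the midpoint does not change the difference.
  Unrolled over \<open>H\<close> steps, the step \<open>j < H\<close> contributes exactly \<open>g\<^sup>H alpha (Vmax - Vmin) / 2\<close>
  and at most \<open>g (\<Sum>i<H-1. g\<^sup>i) alpha (cmax - cmin) / 2\<close> after discounting,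
  whence the factor \<open>H\<close> in the bound.\<close>

lemma pmf_expectation_bounds:
  fixes f :: "'b \<Rightarrow> real"
  assumes "\<And>x. l \<le> f x" and "\<And>x. f x \<le> u"
  shows "l \<le> measure_pmf.expectation p f \<and> measure_pmf.expectation p f \<le> u"
proof -
  have "\<bar>f x\<bar> \<le> max \<bar>l\<bar> \<bar>u\<bar>" for x
    using assms[of x] by linarith
  then have int: "integrable (measure_pmf p) f"
    by (intro measure_pmf.integrable_const_bound[where B = "max \<bar>l\<bar> \<bar>u\<bar>"]) auto
  show ?thesis
    using measure_pmf.integral_ge_const[OF int, of l] measure_pmf.integral_le_const[OF int, of u]
      assms by auto
qed

lemma abs_pmf_expectation_le:
  fixes f :: "'b \<Rightarrow> real"
  assumes "\<And>x. \<bar>f x\<bar> \<le> B"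
  shows "\<bar>measure_pmf.expectation p f\<bar> \<le> B"
proof -
  have "- B \<le> f x" "f x \<le> B" for x
    using assms[of x] by (auto simp: abs_le_iff)
  from pmf_expectation_bounds[of "- B" f B p, OF this] show ?thesis
    by (auto simp: abs_le_iff)
qed

lemma abs_pmf_expectation_diff_le:
  fixes f f' :: "'b \<Rightarrow> real"
  assumes "\<And>x. \<bar>f x\<bar> \<le> B" and "\<And>x. \<bar>f' x\<bar> \<le> B'" and "\<And>x. \<bar>f x - f' x\<bar> \<le> D"
  shows "\<bar>measure_pmf.expectation p f - measure_pmf.expectation p f'\<bar> \<le> D"
proof -
  have "integrable (measure_pmf p) f"
    by (rule measure_pmf.integrable_const_bound[where B = B]) (use assms(1) in auto)
  moreover have "integrable (measure_pmf p) f'"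
    by (rule measure_pmf.integrable_const_bound[where B = B']) (use assms(2) in auto)
  ultimately have "measure_pmf.expectation p f - measure_pmf.expectation p f'
      = measure_pmf.expectation p (\<lambda>x. f x - f' x)"
    by simp
  then show ?thesis
    using abs_pmf_expectation_le[OF assms(3)] by simp
qed

lemma pmf_expectation_diff_le_l1_dist:
  fixes p q :: "'s::finite pmf" and f :: "'s \<Rightarrow> real"
  assumes "\<And>s. L \<le> f s" and "\<And>s. f s \<le> U"
  shows "\<bar>measure_pmf.expectation p f - measure_pmf.expectation q f\<bar>
         \<le> (\<Sum>s\<in>UNIV. \<bar>pmf p s - pmf q s\<bar>) * (U - L) / 2"
proof -
  define m where "m = (L + U) / 2"
  have expectation_sum: "measure_pmf.expectation r f = (\<Sum>s\<in>UNIV. f s * pmf r s)" for r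
    by (rule integral_measure_pmf_real) auto
  have "measure_pmf.expectation p f - measure_pmf.expectation q f
      = (\<Sum>s\<in>UNIV. f s * pmf p s) - (\<Sum>s\<in>UNIV. f s * pmf q s)
        - m * ((\<Sum>s\<in>UNIV. pmf p s) - (\<Sum>s\<in>UNIV. pmf q s))"
    by (simp add: expectation_sum sum_pmf_eq_1)
  also have "\<dots> = (\<Sum>s\<in>UNIV. (f s - m) * (pmf p s - pmf q s))"
    by (simp add: left_diff_distrib right_diff_distrib sum_subtractf sum_distrib_left)
  also have "\<bar>\<dots>\<bar> \<le> (\<Sum>s\<in>UNIV. \<bar>(f s - m) * (pmf p s - pmf q s)\<bar>)"
    by (rule sum_abs)
  also have "\<dots> \<le> (\<Sum>s\<in>UNIV. (U - L) / 2 * \<bar>pmf p s - pmf q s\<bar>)"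
  proof (rule sum_mono)
    fix s
    have "\<bar>f s - m\<bar> \<le> (U - L) / 2"
      using assms[of s] by (auto simp: m_def abs_le_iff field_simps)
    then show "\<bar>(f s - m) * (pmf p s - pmf q s)\<bar> \<le> (U - L) / 2 * \<bar>pmf p s - pmf q s\<bar>"
      unfolding abs_mult by (rule mult_right_mono) simp
  qed
  also have "\<dots> = (U - L) / 2 * (\<Sum>s\<in>UNIV. \<bar>pmf p s - pmf q s\<bar>)"
    by (rule sum_distrib_left[symmetric])
  finally show ?thesis
    by (simp add: algebra_simps)
qed

lemma geometric_sum_Suc: "(\<Sum>i<Suc k. g ^ i) = 1 + g * (\<Sum>i<k. (g :: real) ^ i)"
  by (simp add: sum.lessThan_Suc_shift sum_distrib_left del: sum.lessThan_Suc)

lemma Jaux_bounds: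
  assumes "0 \<le> g"
    and "\<And>s a. lo \<le> c s a" and "\<And>s a. c s a \<le> hi"
    and "\<And>s. vl \<le> V s" and "\<And>s. V s \<le> vh"
  shows "lo * (\<Sum>i<k. g ^ i) + g ^ k * vl \<le> Jaux P c g pol V k h s
       \<and> Jaux P c g pol V k h s \<le> hi * (\<Sum>i<k. g ^ i) + g ^ k * vh"
proof (induction k arbitrary: h s)
  case 0
  show ?case using assms by simp
next
  case (Suc k)
  let ?L = "lo * (\<Sum>i<k. g ^ i) + g ^ k * vl" and ?U = "hi * (\<Sum>i<k. g ^ i) + g ^ k * vh"
  let ?EJ = "\<lambda>a. measure_pmf.expectation (P s a) (Jaux P c g pol V k (h @ [(s, a)]))"
  have "?L \<le> ?EJ a \<and> ?EJ a \<le> ?U" for a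
    using Suc.IH by (intro pmf_expectation_bounds) auto
  then have "lo + g * ?L \<le> c s a + g * ?EJ a \<and> c s a + g * ?EJ a \<le> hi + g * ?U" for a
    using assms(2,3)[of s a] mult_left_mono[OF _ assms(1)] by (smt (verit))
  then have "lo + g * ?L \<le> Jaux P c g pol V (Suc k) h s \<and> Jaux P c g pol V (Suc k) h s \<le> hi + g * ?U"
    by (simp only: Jaux.simps) (intro pmf_expectation_bounds; blast)
  then show ?case
    by (simp add: geometric_sum_Suc algebra_simps del: sum.lessThan_Suc)
qed

lemma Jaux_Suc_diff_le:
  fixes P Ph :: "'s::finite \<Rightarrow> 'a \<Rightarrow> 's pmf"
  assumes "0 \<le> g"
    and l1: "\<And>s a. (\<Sum>s'\<in>UNIV. \<bar>pmf (Ph s a) s' - pmf (P s a) s'\<bar>) \<le> alpha"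
    and cost: "\<And>s a. \<bar>ch s a - c s a\<bar> \<le> alpha" and c_bounded: "\<And>s a. \<bar>c s a\<bar> \<le> C"
    and J_range: "\<And>h s. L \<le> Jaux P c g pol V k h s" "\<And>h s. Jaux P c g pol V k h s \<le> U"
    and diff: "\<And>h s. \<bar>Jaux P c g pol V k h s - Jaux Ph ch g pol V k h s\<bar> \<le> D"
  shows "\<bar>Jaux P c g pol V (Suc k) h s - Jaux Ph ch g pol V (Suc k) h s\<bar>
         \<le> alpha + g * (alpha * (U - L) / 2 + D)"
proof -
  let ?J = "\<lambda>a. Jaux P c g pol V k (h @ [(s, a)])"
  let ?Jh = "\<lambda>a. Jaux Ph ch g pol V k (h @ [(s, a)])"
  define f where "f a = c s a + g * measure_pmf.expectation (P s a) (?J a)" for a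
  define fh where "fh a = ch s a + g * measure_pmf.expectation (Ph s a) (?Jh a)" for a
  define B where "B = max \<bar>L\<bar> \<bar>U\<bar>"
  have J_abs: "\<bar>Jaux P c g pol V k h' s'\<bar> \<le> B" for h' s'
    using J_range[of h' s'] by (auto simp: B_def)
  have Jh_abs: "\<bar>Jaux Ph ch g pol V k h' s'\<bar> \<le> B + D" for h' s'
    using J_abs[of h' s'] diff[of h' s'] by linarith
  have step_abs: "\<bar>x + g * y\<bar> \<le> X + g * Y" if "\<bar>x\<bar> \<le> X" "\<bar>y\<bar> \<le> Y" for x y X Y
  proof -
    have "\<bar>x + g * y\<bar> \<le> \<bar>x\<bar> + g * \<bar>y\<bar>"
      using \<open>0 \<le> g\<close> by (metis abs_mult abs_of_nonneg abs_triangle_ineq)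
    also have "\<dots> \<le> X + g * Y"
      using that \<open>0 \<le> g\<close> by (intro add_mono mult_left_mono)
    finally show ?thesis .
  qed
  have "\<bar>f a\<bar> \<le> C + g * B" for a
    unfolding f_def using c_bounded abs_pmf_expectation_le[OF J_abs] by (rule step_abs)
  moreover have "\<bar>fh a\<bar> \<le> (C + alpha) + g * (B + D)" for a
  proof -
    have "\<bar>ch s a\<bar> \<le> C + alpha"
      using c_bounded[of s a] cost[of s a] by linarith
    then show ?thesis
      unfolding fh_def using abs_pmf_expectation_le[OF Jh_abs] by (rule step_abs)
  qed
  moreover have "\<bar>f a - fh a\<bar> \<le> alpha + g * (alpha * (U - L) / 2 + D)" for a
  proof -
    have "L \<le> U" using J_range by (meson order.trans)
    have "\<bar>measure_pmf.expectation (Ph s a) (?J a) - measure_pmf.expectation (P s a) (?J a)\<bar>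
        \<le> (\<Sum>s'\<in>UNIV. \<bar>pmf (Ph s a) s' - pmf (P s a) s'\<bar>) * (U - L) / 2"
      by (rule pmf_expectation_diff_le_l1_dist[OF J_range])
    also have "\<dots> \<le> alpha * (U - L) / 2"
      using l1[of s a] \<open>L \<le> U\<close> by (intro divide_right_mono mult_right_mono) auto
    finally have transition:
      "\<bar>measure_pmf.expectation (P s a) (?J a) - measure_pmf.expectation (Ph s a) (?J a)\<bar>
        \<le> alpha * (U - L) / 2"
      by (simp add: abs_minus_commute)
    have continuation: "\<bar>measure_pmf.expectation (Ph s a) (?J a) - measure_pmf.expectation (Ph s a) (?Jh a)\<bar>
        \<le> D"
      by (rule abs_pmf_expectation_diff_le[OF J_abs Jh_abs diff])
    have "f a - fh a = (c s a - ch s a)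
        + g * (measure_pmf.expectation (P s a) (?J a) - measure_pmf.expectation (Ph s a) (?Jh a))"
      by (simp add: f_def fh_def algebra_simps)
    also have "\<bar>\<dots>\<bar> \<le> alpha + g * (alpha * (U - L) / 2 + D)"
    proof (rule step_abs)
      show "\<bar>c s a - ch s a\<bar> \<le> alpha"
        using cost[of s a] by (simp add: abs_minus_commute)
      show "\<bar>measure_pmf.expectation (P s a) (?J a) - measure_pmf.expectation (Ph s a) (?Jh a)\<bar>
          \<le> alpha * (U - L) / 2 + D"
        using transition continuation by linarith
    qed
    finally show ?thesis .
  qed
  ultimately show ?thesis
    unfolding Jaux.simps f_def[symmetric] fh_def[symmetric] by (rule abs_pmf_expectation_diff_le)
qed

definition horizon_error :: "real \<Rightarrow> real \<Rightarrow> real \<Rightarrow> real \<Rightarrow> nat \<Rightarrow> real" where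
  "horizon_error g alpha dc dV k =
     alpha * (\<Sum>i<k. g ^ i) + real k * g ^ k * alpha * dV / 2
     + real k * g * (\<Sum>i<k - 1. g ^ i) * alpha * dc / 2"

lemma horizon_error_Suc_ge:
  assumes "0 \<le> g" and "0 \<le> alpha" and "0 \<le> dc"
  shows "alpha + g * (alpha * (dc * (\<Sum>i<k. g ^ i) + g ^ k * dV) / 2 + horizon_error g alpha dc dV k)
         \<le> horizon_error g alpha dc dV (Suc k)"
proof -
  define S where "S = (\<Sum>i<k. g ^ i)"
  define T where "T = (\<Sum>i<k - 1. g ^ i)"
  have "g * T \<le> S"
    using \<open>0 \<le> g\<close> by (cases k) (simp_all add: S_def T_def geometric_sum_Suc del: sum.lessThan_Suc)
  then have "real k * g * alpha * dc * (g * T) \<le> real k * g * alpha * dc * S"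
    using assms by (intro mult_left_mono) auto
  then show ?thesis
    unfolding horizon_error_def geometric_sum_Suc diff_Suc_1 S_def[symmetric] T_def[symmetric]
    by (simp add: field_simps)
qed

lemma Jaux_diff_le_horizon_error:
  fixes P Ph :: "'s::finite \<Rightarrow> 'a \<Rightarrow> 's pmf"
  assumes "0 \<le> g"
    and l1: "\<And>s a. (\<Sum>s'\<in>UNIV. \<bar>pmf (Ph s a) s' - pmf (P s a) s'\<bar>) \<le> alpha"
    and cost: "\<And>s a. \<bar>ch s a - c s a\<bar> \<le> alpha"
    and c_bounds: "\<And>s a. cmin \<le> c s a" "\<And>s a. c s a \<le> cmax"
    and V_bounds: "\<And>s. Vmin \<le> V s" "\<And>s. V s \<le> Vmax"
  shows "\<bar>Jaux P c g pol V k h s - Jaux Ph ch g pol V k h s\<bar>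
         \<le> horizon_error g alpha (cmax - cmin) (Vmax - Vmin) k"
proof (induction k arbitrary: h s)
  case 0
  show ?case by (simp add: horizon_error_def)
next
  case (Suc k)
  define L where "L = cmin * (\<Sum>i<k. g ^ i) + g ^ k * Vmin"
  define U where "U = cmax * (\<Sum>i<k. g ^ i) + g ^ k * Vmax"
  have "L \<le> Jaux P c g pol V k h' s' \<and> Jaux P c g pol V k h' s' \<le> U" for h' s'
    unfolding L_def U_def by (rule Jaux_bounds) (use \<open>0 \<le> g\<close> c_bounds V_bounds in auto)
  then have J_range: "L \<le> Jaux P c g pol V k h' s'" "Jaux P c g pol V k h' s' \<le> U" for h' s'
    by auto
  have "\<bar>c s' a\<bar> \<le> max \<bar>cmin\<bar> \<bar>cmax\<bar>" for s' a
    using c_bounds[of s' a] by linarith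
  then have "\<bar>Jaux P c g pol V (Suc k) h s - Jaux Ph ch g pol V (Suc k) h s\<bar>
      \<le> alpha + g * (alpha * (U - L) / 2 + horizon_error g alpha (cmax - cmin) (Vmax - Vmin) k)"
    using Jaux_Suc_diff_le[OF \<open>0 \<le> g\<close> l1 cost _ J_range Suc.IH] by blast
  also have "\<dots> \<le> horizon_error g alpha (cmax - cmin) (Vmax - Vmin) (Suc k)"
  proof -
    have "0 \<le> alpha" "0 \<le> cmax - cmin"
      using cost[of s undefined] c_bounds[of s undefined] by auto
    moreover have "U - L = (cmax - cmin) * (\<Sum>i<k. g ^ i) + g ^ k * (Vmax - Vmin)"
      by (simp add: L_def U_def algebra_simps)
    ultimately show ?thesis
      using horizon_error_Suc_ge[OF \<open>0 \<le> g\<close>] by simp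
  qed
  finally show ?case .
qed

theorem mainTheorem2:
  fixes P Ph :: "'s::finite \<Rightarrow> 'a \<Rightarrow> 's pmf"
    and c ch :: "'s \<Rightarrow> 'a \<Rightarrow> real"
    and g alpha cmin cmax Vmin Vmax :: real
    and H :: nat
    and polstar pol :: "('s, 'a) policy"
  assumes "0 \<le> g" and "g < 1"
    and "\<forall>s a. (\<Sum>s'\<in>UNIV. \<bar>pmf (Ph s a) s' - pmf (P s a) s'\<bar>) \<le> alpha"
    and "\<forall>s a. \<bar>ch s a - c s a\<bar> \<le> alpha"
    and "optimal_policy P c g polstar"
    and "\<forall>s. Vmin \<le> value_fun P c g polstar s \<and> value_fun P c g polstar s \<le> Vmax"
    and "\<forall>s a. cmin \<le> c s a \<and> c s a \<le> cmax"
    and "1 \<le> H"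
  shows "Max (range (\<lambda>s. \<bar>Jfun P c g pol (value_fun P c g polstar) H s
                           - Jfun Ph ch g pol (value_fun P c g polstar) H s\<bar>))
         \<le> g * (1 - g ^ (H - 1)) / (1 - g) * alpha * real H * (cmax - cmin) / 2
           + g ^ H * alpha * real H * (Vmax - Vmin) / 2
           + (1 - g ^ H) / (1 - g) * alpha"
proof -
  have "horizon_error g alpha (cmax - cmin) (Vmax - Vmin) H
      = g * (1 - g ^ (H - 1)) / (1 - g) * alpha * real H * (cmax - cmin) / 2
        + g ^ H * alpha * real H * (Vmax - Vmin) / 2
        + (1 - g ^ H) / (1 - g) * alpha"
    using \<open>g < 1\<close> by (simp add: horizon_error_def sum_gp_strict algebra_simps)
  moreover have "\<bar>Jfun P c g pol (value_fun P c g polstar) H s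
      - Jfun Ph ch g pol (value_fun P c g polstar) H s\<bar>
      \<le> horizon_error g alpha (cmax - cmin) (Vmax - Vmin) H" for s
    unfolding Jfun_def by (rule Jaux_diff_le_horizon_error) (use assms in auto)
  ultimately show ?thesis
    by (subst Max_le_iff) auto
qed

end
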